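(* Let $I$ be an index set of non-measurable cardinality and $H$ the group $\mathbb Z^{(I)}$ with the topology of pointwise convergence on $\mathbb Z^I$. Let $\bar t\in\widehat H\subseteq\mathbb T^I$ and $i\in I$ with $\bar t(i)\neq0$. Then for each continuity subset $F$ for $\bar t$ there is $\bar x\in F$ with $\bar x(i)\neq0$.
   Context: $\mathbb Z^{(I)}$ is the group of finitely supported functions $I\to\mathbb Z$, paired with $\mathbb Z^I$ by $\langle\bar g,\bar x\rangle=\sum_i\bar g(i)\bar x(i)$; $H$ carries the weakest topology making all maps $\bar g\mapsto\langle\bar g,\bar x\rangle\in\mathbb Z$ ($\mathbb Z$ discrete) continuous. $\mathbb T=\mathbb R/\mathbb Z$; an element $\bar t\in\mathbb T^I$ is identified with the homomorphism $\bar g\mapsto\langle\bar g,\bar t\rangle=\sum_i\bar g(i)\bar t(i)$, and $\widehat H$ (continuous homomorphisms $H\to\mathbb T$) is thereby a subgroup of $\mathbb T^I$. For $\bar t\in\widehat H$, a continuity subset for $\bar t$ is a finite set $F=\{\bar x_1,\dots,\bar x_m\}\subseteq\mathbb Z^I$, minimal under inclusion, such that every $\bar g\in H$ with $\langle\bar g,\bar x_j\rangle=0$ for all $j$ satisfies $\langle\bar g,\bar t\rangle=0$. *)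

theory Defs
  imports "HOL-Analysis.Analysis"
begin

text \<open>Ulam-measurable cardinality: the set A carries a non-principal, countably
  complete ultrafilter (equivalently a non-trivial two-valued sigma-additive measure
  defined on all subsets and vanishing on singletons).\<close>
definition ulam_measurable :: "'a set \<Rightarrow> bool" where
  "ulam_measurable A \<longleftrightarrow> (\<exists>U :: 'a set set.
      U \<subseteq> Pow A \<and> A \<in> U \<and> {} \<notin> U
    \<and> (\<forall>S T. S \<in> U \<and> S \<subseteq> T \<and> T \<subseteq> A \<longrightarrow> T \<in> U)
    \<and> (\<forall>S. S \<subseteq> A \<longrightarrow> S \<in> U \<or> A - S \<in> U)
    \<and> (\<forall>C. countable C \<and> C \<noteq> {} \<and> C \<subseteq> U \<longrightarrow> \<Inter>C \<in> U)
    \<and> (\<forall>a\<in>A. {a} \<notin> U))"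

text \<open>The index set I is the universe of the type 'i.
  H = Z^(I): finitely supported integer functions.\<close>
definition fin_supp :: "('i \<Rightarrow> int) set" where
  "fin_supp = {g. finite {i. g i \<noteq> 0}}"

definition pair :: "('i \<Rightarrow> int) \<Rightarrow> ('i \<Rightarrow> 'a::comm_ring_1) \<Rightarrow> 'a" where
  "pair g x = (\<Sum>i\<in>{i. g i \<noteq> 0}. of_int (g i) * x i)"

text \<open>Topology on H: weakest topology making all g \<mapsto> pair g x (x in Z^I) continuous
  into discrete Z; generated by the subbasis of preimages of points.\<close>
definition H_topology :: "('i \<Rightarrow> int) topology" where
  "H_topology = topology_generated_by
     {{g \<in> fin_supp. pair g x = n} | (x :: 'i \<Rightarrow> int) n. True}"

text \<open>An element t of T^I is represented by t :: 'i \<Rightarrow> real (coordinates mod 1);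
  the associated homomorphism H \<rightarrow> T is g \<mapsto> pair g t mod 1.  The topology of R/Z is
  realised via the homeomorphism R/Z \<cong> unit circle, s mod 1 \<mapsto> exp(2 pi i s).\<close>
definition to_circle :: "real \<Rightarrow> complex" where
  "to_circle s = exp (2 * of_real pi * \<i> * of_real s)"

definition in_dual :: "('i \<Rightarrow> real) \<Rightarrow> bool" where
  "in_dual t \<longleftrightarrow> continuous_map H_topology (top_of_set (sphere 0 1))
                     (\<lambda>g. to_circle (pair g t))"

definition zero_T :: "real \<Rightarrow> bool" where
  "zero_T s \<longleftrightarrow> s \<in> \<int>"

definition annihilates :: "('i \<Rightarrow> int) set \<Rightarrow> ('i \<Rightarrow> real) \<Rightarrow> bool" where
  "annihilates F t \<longleftrightarrow>
     (\<forall>g\<in>fin_supp. (\<forall>x\<in>F. pair g x = 0) \<longrightarrow> zero_T (pair g t))"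

definition continuity_subset :: "('i \<Rightarrow> int) set \<Rightarrow> ('i \<Rightarrow> real) \<Rightarrow> bool" where
  "continuity_subset F t \<longleftrightarrow> finite F \<and> annihilates F t
     \<and> (\<forall>F'. F' \<subset> F \<longrightarrow> \<not> annihilates F' t)"

end

theory Submission
  imports Defs
begin

lemma support_indicator_singleton: "{j. (indicator {i} j :: 'a::zero_neq_one) \<noteq> 0} = {i}"
  by (auto simp: indicator_def)

lemma indicator_singleton_in_fin_supp: "(indicator {i} :: 'i \<Rightarrow> int) \<in> fin_supp"
  by (simp add: fin_supp_def support_indicator_singleton)

lemma pair_indicator_singleton: "pair (indicator {i}) x = x i"
  by (simp add: pair_def support_indicator_singleton)

lemma annihilatesD:
  assumes "annihilates F t" and "g \<in> fin_supp" and "\<forall>x\<in>F. pair g x = 0"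
  shows "zero_T (pair g t)"
  using assms unfolding annihilates_def by simp

lemma annihilates_coordinate:
  assumes "annihilates F t" and "\<forall>x\<in>F. x i = 0"
  shows "zero_T (t i)"
proof -
  have "\<forall>x\<in>F. pair (indicator {i}) x = 0"
    using assms(2) by (simp add: pair_indicator_singleton)
  then have "zero_T (pair (indicator {i}) t)"
    by (rule annihilatesD[OF assms(1) indicator_singleton_in_fin_supp])
  then show ?thesis
    by (simp add: pair_indicator_singleton)
qed

theorem lemma4p9:
  fixes t :: "'i \<Rightarrow> real" and i :: 'i and F :: "('i \<Rightarrow> int) set"
  assumes "\<not> ulam_measurable (UNIV :: 'i set)"
    and "in_dual t"
    and "\<not> zero_T (t i)"
    and "continuity_subset F t"
  shows "\<exists>x\<in>F. x i \<noteq> 0"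
proof (rule ccontr)
  assume "\<not> (\<exists>x\<in>F. x i \<noteq> 0)"
  then have "\<forall>x\<in>F. x i = 0"
    by blast
  moreover have "annihilates F t"
    using assms(4) unfolding continuity_subset_def by blast
  ultimately have "zero_T (t i)"
    by (rule annihilates_coordinate[rotated])
  with assms(3) show False ..
qed

end
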